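(* Let \(f\colon\mathbb{R}^n\to\mathbb{R}\) be a real valued function and \(P\colon\mathbb{R}^n\to\mathbb{R}^n\) a vector field. For arbitrary sequences of real numbers \(\{a_k\}_{k\ge0},\{b_k^-\}_{k\ge0},\{b_k^+\}_{k\ge0}\) consider the time-dependent discrete Lagrangians and discrete forces \[L^k_d(z_0,z_1)=a_k\tfrac12\|z_1-z_0\|^2-b_k^-f(z_0)-b_{k+1}^+f(z_1),\] \[(F^k_d)^-(z_0,z_1)=-\tfrac{a_{k-1}}{a_k}(b_k^-+b_k^+)P(z_0),\qquad (F^k_d)^+(z_0,z_1)=(b_k^-+b_k^+)P(z_0).\] (1) If \(f\) is differentiable with \(P=\nabla f\) and \(a_k\neq0\) for all \(k\), then the free discrete Euler–Lagrange equations of \(L^k_d\) and the forced discrete Euler–Lagrange equations of \((L^k_d,(F^k_d)^-,(F^k_d)^+)\) are respectively equivalent to the recursive schemes \[y_{k+1}=x_k-\eta_kP(x_k),\quad x_{k+1}=y_{k+1}+\mu_k(x_k-x_{k-1})\] and \[\bar y_{k+1}=\bar x_k-\eta_kP(\bar x_k),\quad \bar x_{k+1}=\bar y_{k+1}+\mu_k(\bar y_{k+1}-\bar y_k),\] where \(\mu_{k+1}=a_k/a_{k+1}\) and \(\eta_k=(b_k^-+b_k^+)/a_k\) for \(k\ge0\). (2) Conversely, given a vector field \(P\) and arbitrary real sequences \(\{\mu_{k+1}\}_{k\ge0}\), \(\{\eta_k\}_{k\ge0}\), consider the sequences defined by the two schemes above. If \(P\) is conservative, \(P=\nabla f\), and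 \(\mu_{k+1}\neq0\) for all \(k\), then both schemes are variational: they are equivalent, respectively, to the free and forced discrete Euler–Lagrange equations of the discrete Lagrangians and forces above, with \(f\) the potential of \(P\) and with \(a_0=1\), \(a_{k+1}=a_k/\mu_{k+1}\) and \(b_k^\pm=\tfrac12a_k\eta_k\) for all \(k\ge0\).
   Context: For a family of discrete Lagrangians \(L^k_d\colon\mathbb{R}^n\times\mathbb{R}^n\to\mathbb{R}\) and discrete forces \((F^k_d)^\pm\), a sequence \((x_k)\) satisfies the forced discrete Euler–Lagrange equations if \(D_1L^k_d(x_k,x_{k+1})+D_2L^{k-1}_d(x_{k-1},x_k)+(F^k_d)^-(x_k,x_{k+1})+(F^{k-1}_d)^+(x_{k-1},x_k)=0\) for all interior indices \(k\ge1\); the free discrete Euler–Lagrange equations are the same with the force terms omitted, \(D_1L^k_d(x_k,x_{k+1})+D_2L^{k-1}_d(x_{k-1},x_k)=0\). Here \(D_1,D_2\) are partial derivatives (gradients) with respect to the first and second arguments. These equations are the stationarity conditions of the discrete (Lagrange–d'Alembert) variational principle \(\delta\sum_k L^k_d(x_k,x_{k+1})+\sum_k[(F^k_d)^-(x_k,x_{k+1})\delta x_k+(F^k_d)^+(x_k,x_{k+1})\delta x_{k+1}]=0\) for variations with fixed endpoints. *)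

theory Defs
  imports "HOL-Analysis.Analysis"
begin

definition grad :: "('v::real_inner \<Rightarrow> real) \<Rightarrow> 'v \<Rightarrow> 'v" where
  "grad g x = (THE v. (g has_derivative (\<lambda>h. v \<bullet> h)) (at x))"

definition D1 :: "('v::real_inner \<Rightarrow> 'v \<Rightarrow> real) \<Rightarrow> 'v \<Rightarrow> 'v \<Rightarrow> 'v" where
  "D1 L z0 z1 = grad (\<lambda>z. L z z1) z0"

definition D2 :: "('v::real_inner \<Rightarrow> 'v \<Rightarrow> real) \<Rightarrow> 'v \<Rightarrow> 'v \<Rightarrow> 'v" where
  "D2 L z0 z1 = grad (\<lambda>z. L z0 z) z1"

definition free_DEL :: "(nat \<Rightarrow> 'v::real_inner \<Rightarrow> 'v \<Rightarrow> real) \<Rightarrow> (nat \<Rightarrow> 'v) \<Rightarrow> bool" where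
  "free_DEL L x \<longleftrightarrow>
     (\<forall>k\<ge>1. D1 (L k) (x k) (x (k+1)) + D2 (L (k-1)) (x (k-1)) (x k) = 0)"

definition forced_DEL ::
  "(nat \<Rightarrow> 'v::real_inner \<Rightarrow> 'v \<Rightarrow> real) \<Rightarrow> (nat \<Rightarrow> 'v \<Rightarrow> 'v \<Rightarrow> 'v) \<Rightarrow> (nat \<Rightarrow> 'v \<Rightarrow> 'v \<Rightarrow> 'v)
    \<Rightarrow> (nat \<Rightarrow> 'v) \<Rightarrow> bool" where
  "forced_DEL L Fm Fp x \<longleftrightarrow>
     (\<forall>k\<ge>1. D1 (L k) (x k) (x (k+1)) + D2 (L (k-1)) (x (k-1)) (x k)
            + Fm k (x k) (x (k+1)) + Fp (k-1) (x (k-1)) (x k) = 0)"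

definition Ld :: "(nat \<Rightarrow> real) \<Rightarrow> (nat \<Rightarrow> real) \<Rightarrow> (nat \<Rightarrow> real) \<Rightarrow> ('v::real_inner \<Rightarrow> real)
    \<Rightarrow> nat \<Rightarrow> 'v \<Rightarrow> 'v \<Rightarrow> real" where
  "Ld a bm bp f k z0 z1 = a k * (1/2) * (norm (z1 - z0))^2 - bm k * f z0 - bp (k+1) * f z1"

text \<open>(F^k_d)^-(z0,z1) = -(a_{k-1}/a_k)(b^-_k+b^+_k) P(z0)  (only used for k >= 1).\<close>
definition Fdm :: "(nat \<Rightarrow> real) \<Rightarrow> (nat \<Rightarrow> real) \<Rightarrow> (nat \<Rightarrow> real) \<Rightarrow> ('v::real_inner \<Rightarrow> 'v)
    \<Rightarrow> nat \<Rightarrow> 'v \<Rightarrow> 'v \<Rightarrow> 'v" where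
  "Fdm a bm bp P k z0 z1 = (- (a (k-1) / a k) * (bm k + bp k)) *\<^sub>R P z0"

definition Fdp :: "(nat \<Rightarrow> real) \<Rightarrow> (nat \<Rightarrow> real) \<Rightarrow> (nat \<Rightarrow> real) \<Rightarrow> ('v::real_inner \<Rightarrow> 'v)
    \<Rightarrow> nat \<Rightarrow> 'v \<Rightarrow> 'v \<Rightarrow> 'v" where
  "Fdp a bm bp P k z0 z1 = (bm k + bp k) *\<^sub>R P z0"

definition scheme_free :: "(nat \<Rightarrow> real) \<Rightarrow> (nat \<Rightarrow> real) \<Rightarrow> ('v::real_vector \<Rightarrow> 'v)
    \<Rightarrow> (nat \<Rightarrow> 'v) \<Rightarrow> (nat \<Rightarrow> 'v) \<Rightarrow> bool" where
  "scheme_free mu eta P x y \<longleftrightarrow>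
     (\<forall>k. y (k+1) = x k - eta k *\<^sub>R P (x k)) \<and>
     (\<forall>k\<ge>1. x (k+1) = y (k+1) + mu k *\<^sub>R (x k - x (k-1)))"

definition scheme_forced :: "(nat \<Rightarrow> real) \<Rightarrow> (nat \<Rightarrow> real) \<Rightarrow> ('v::real_vector \<Rightarrow> 'v)
    \<Rightarrow> (nat \<Rightarrow> 'v) \<Rightarrow> (nat \<Rightarrow> 'v) \<Rightarrow> bool" where
  "scheme_forced mu eta P x y \<longleftrightarrow>
     (\<forall>k. y (k+1) = x k - eta k *\<^sub>R P (x k)) \<and>
     (\<forall>k\<ge>1. x (k+1) = y (k+1) + mu k *\<^sub>R (y (k+1) - y k))"

end

theory Submission imports Defs begin

text \<open>Both partial gradients of \<open>Ld\<close> are explicit, so at an interior index the (forced) discrete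
  Euler--Lagrange expression equals \<open>a k\<close> times the defect of the second-order recurrence
  obtained by eliminating \<open>y\<close> from the corresponding scheme: the heavy-ball recurrence for the
  free equations and Nesterov's recurrence for the forced ones. Since \<open>a k \<noteq> 0\<close>, the two
  vanish together. In part (2) the weights \<open>a k = 1 / (\<mu>\<^sub>1 \<cdots> \<mu>\<^sub>k)\<close> and
  \<open>b\<^sup>\<plusminus>\<^sub>k = a\<^sub>k \<eta>\<^sub>k / 2\<close> satisfy the hypotheses of part (1).\<close>

definition gradient_step :: "(nat \<Rightarrow> real) \<Rightarrow> ('v::real_vector \<Rightarrow> 'v) \<Rightarrow> (nat \<Rightarrow> 'v) \<Rightarrow> nat \<Rightarrow> 'v"
  where "gradient_step eta P x k = x k - eta k *\<^sub>R P (x k)"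

definition heavy_ball_recurrence ::
    "(nat \<Rightarrow> real) \<Rightarrow> (nat \<Rightarrow> real) \<Rightarrow> ('v::real_vector \<Rightarrow> 'v) \<Rightarrow> (nat \<Rightarrow> 'v) \<Rightarrow> bool"
  where "heavy_ball_recurrence mu eta P x \<longleftrightarrow>
    (\<forall>k\<ge>1. x (k+1) = gradient_step eta P x k + mu k *\<^sub>R (x k - x (k-1)))"

definition nesterov_recurrence ::
    "(nat \<Rightarrow> real) \<Rightarrow> (nat \<Rightarrow> real) \<Rightarrow> ('v::real_vector \<Rightarrow> 'v) \<Rightarrow> (nat \<Rightarrow> 'v) \<Rightarrow> bool"
  where "nesterov_recurrence mu eta P x \<longleftrightarrow>
    (\<forall>k\<ge>1. x (k+1) = gradient_step eta P x k
                     + mu k *\<^sub>R (gradient_step eta P x k - gradient_step eta P x (k-1)))"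

lemma grad_eqI:
  assumes "(g has_derivative (\<lambda>h. v \<bullet> h)) (at x)"
  shows "grad g x = v"
  unfolding grad_def
proof (rule the_equality)
  fix w assume "(g has_derivative (\<lambda>h. w \<bullet> h)) (at x)"
  with assms have "(\<lambda>h. w \<bullet> h) = (\<lambda>h. v \<bullet> h)"
    using has_derivative_unique by blast
  then have "(w - v) \<bullet> (w - v) = 0"
    by (metis inner_diff_left diff_self)
  then show "w = v" by simp
qed (rule assms)

lemma D1_Ld:
  assumes "\<And>z. (f has_derivative (\<lambda>h. P z \<bullet> h)) (at z)"
  shows "D1 (Ld a bm bp f k) z0 z1 = a k *\<^sub>R (z0 - z1) - bm k *\<^sub>R P z0"
  unfolding D1_def
proof (rule grad_eqI)
  have "((\<lambda>z. a k * (1/2) * ((z1 - z) \<bullet> (z1 - z)) - bm k * f z - bp (k+1) * f z1) has_derivative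
     (\<lambda>h. a k * (1/2) * ((0 - h) \<bullet> (z1 - z0) + (z1 - z0) \<bullet> (0 - h)) - bm k * (P z0 \<bullet> h) - 0)) (at z0)"
    using assms by (auto intro!: derivative_eq_intros)
  then show "((\<lambda>z. Ld a bm bp f k z z1) has_derivative
      (\<lambda>h. (a k *\<^sub>R (z0 - z1) - bm k *\<^sub>R P z0) \<bullet> h)) (at z0)"
    unfolding Ld_def power2_norm_eq_inner
    by (rule has_derivative_eq_rhs) (auto simp: algebra_simps inner_commute fun_eq_iff)
qed

lemma D2_Ld:
  assumes "\<And>z. (f has_derivative (\<lambda>h. P z \<bullet> h)) (at z)"
  shows "D2 (Ld a bm bp f k) z0 z1 = a k *\<^sub>R (z1 - z0) - bp (k+1) *\<^sub>R P z1"
  unfolding D2_def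
proof (rule grad_eqI)
  have "((\<lambda>z. a k * (1/2) * ((z - z0) \<bullet> (z - z0)) - bm k * f z0 - bp (k+1) * f z) has_derivative
     (\<lambda>h. a k * (1/2) * ((h - 0) \<bullet> (z1 - z0) + (z1 - z0) \<bullet> (h - 0)) - 0 - bp (k+1) * (P z1 \<bullet> h))) (at z1)"
    using assms by (auto intro!: derivative_eq_intros)
  then show "((\<lambda>z. Ld a bm bp f k z0 z) has_derivative
      (\<lambda>h. (a k *\<^sub>R (z1 - z0) - bp (k+1) *\<^sub>R P z1) \<bullet> h)) (at z1)"
    unfolding Ld_def power2_norm_eq_inner
    by (rule has_derivative_eq_rhs) (auto simp: algebra_simps inner_commute fun_eq_iff)
qed

text \<open>The witness \<open>y k = gradient_step eta P x (k-1)\<close> takes a junk value at \<open>k = 0\<close> (truncated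
  subtraction); this is harmless because \<open>y 0\<close> enters neither scheme.\<close>

lemma ex_scheme_free_iff_heavy_ball:
  "(\<exists>y. scheme_free mu eta P x y) \<longleftrightarrow> heavy_ball_recurrence mu eta P x"
proof
  assume "\<exists>y. scheme_free mu eta P x y"
  then show "heavy_ball_recurrence mu eta P x"
    by (auto simp: scheme_free_def heavy_ball_recurrence_def gradient_step_def)
next
  assume "heavy_ball_recurrence mu eta P x"
  then have "scheme_free mu eta P x (\<lambda>k. gradient_step eta P x (k-1))"
    by (simp add: scheme_free_def heavy_ball_recurrence_def gradient_step_def)
  then show "\<exists>y. scheme_free mu eta P x y" by blast
qed

lemma ex_scheme_forced_iff_nesterov:
  "(\<exists>y. scheme_forced mu eta P x y) \<longleftrightarrow> nesterov_recurrence mu eta P x"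
proof
  assume "\<exists>y. scheme_forced mu eta P x y"
  then obtain y where y: "scheme_forced mu eta P x y" ..
  then have "y k = gradient_step eta P x (k-1)" if "k \<ge> 1" for k
    using that by (auto simp: scheme_forced_def gradient_step_def dest: spec[of _ "k-1"])
  with y show "nesterov_recurrence mu eta P x"
    by (auto simp: scheme_forced_def nesterov_recurrence_def)
next
  assume "nesterov_recurrence mu eta P x"
  then have "scheme_forced mu eta P x (\<lambda>k. gradient_step eta P x (k-1))"
    by (simp add: scheme_forced_def nesterov_recurrence_def gradient_step_def)
  then show "\<exists>y. scheme_forced mu eta P x y" by blast
qed

lemma free_DEL_Ld_iff_heavy_ball:
  assumes grad_f: "\<And>z. (f has_derivative (\<lambda>h. P z \<bullet> h)) (at z)"
    and a_nonzero: "\<And>k. a k \<noteq> 0"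
    and a_mu: "\<And>k. k \<ge> 1 \<Longrightarrow> a (k-1) = mu k * a k"
    and b_eta: "\<And>k. bm k + bp k = eta k * a k"
  shows "free_DEL (Ld a bm bp f) x \<longleftrightarrow> heavy_ball_recurrence mu eta P x"
proof -
  have residual: "D1 (Ld a bm bp f k) (x k) (x (k+1)) + D2 (Ld a bm bp f (k-1)) (x (k-1)) (x k)
      = a k *\<^sub>R (gradient_step eta P x k + mu k *\<^sub>R (x k - x (k-1)) - x (k+1))"
    if "k \<ge> 1" for k
  proof -
    have "D1 (Ld a bm bp f k) (x k) (x (k+1)) + D2 (Ld a bm bp f (k-1)) (x (k-1)) (x k)
        = a k *\<^sub>R (x k - x (k+1)) + a (k-1) *\<^sub>R (x k - x (k-1)) - (bm k + bp k) *\<^sub>R P (x k)"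
      using that by (simp add: D1_Ld[OF grad_f] D2_Ld[OF grad_f] algebra_simps)
    then show ?thesis
      unfolding a_mu[OF that] b_eta gradient_step_def by (simp add: algebra_simps)
  qed
  have "D1 (Ld a bm bp f k) (x k) (x (k+1)) + D2 (Ld a bm bp f (k-1)) (x (k-1)) (x k) = 0
      \<longleftrightarrow> x (k+1) = gradient_step eta P x k + mu k *\<^sub>R (x k - x (k-1))"
    if "k \<ge> 1" for k
    unfolding residual[OF that] using a_nonzero[of k] by auto
  then show ?thesis
    unfolding free_DEL_def heavy_ball_recurrence_def by blast
qed

lemma forced_DEL_Ld_iff_nesterov:
  assumes grad_f: "\<And>z. (f has_derivative (\<lambda>h. P z \<bullet> h)) (at z)"
    and a_nonzero: "\<And>k. a k \<noteq> 0"
    and a_mu: "\<And>k. k \<ge> 1 \<Longrightarrow> a (k-1) = mu k * a k"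
    and b_eta: "\<And>k. bm k + bp k = eta k * a k"
  shows "forced_DEL (Ld a bm bp f) (Fdm a bm bp P) (Fdp a bm bp P) x
    \<longleftrightarrow> nesterov_recurrence mu eta P x"
proof -
  have residual: "D1 (Ld a bm bp f k) (x k) (x (k+1)) + D2 (Ld a bm bp f (k-1)) (x (k-1)) (x k)
        + Fdm a bm bp P k (x k) (x (k+1)) + Fdp a bm bp P (k-1) (x (k-1)) (x k)
      = a k *\<^sub>R (gradient_step eta P x k
          + mu k *\<^sub>R (gradient_step eta P x k - gradient_step eta P x (k-1)) - x (k+1))"
    if "k \<ge> 1" for k
  proof -
    have "D1 (Ld a bm bp f k) (x k) (x (k+1)) + D2 (Ld a bm bp f (k-1)) (x (k-1)) (x k)
        + Fdm a bm bp P k (x k) (x (k+1)) + Fdp a bm bp P (k-1) (x (k-1)) (x k)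
        = a k *\<^sub>R (x k - x (k+1)) + a (k-1) *\<^sub>R (x k - x (k-1)) - (bm k + bp k) *\<^sub>R P (x k)
          - (a (k-1) / a k * (bm k + bp k)) *\<^sub>R P (x k) + (bm (k-1) + bp (k-1)) *\<^sub>R P (x (k-1))"
      using that by (simp add: D1_Ld[OF grad_f] D2_Ld[OF grad_f] Fdm_def Fdp_def algebra_simps)
    then show ?thesis
      unfolding a_mu[OF that] b_eta gradient_step_def using a_nonzero[of k]
      by (simp add: algebra_simps)
  qed
  have "D1 (Ld a bm bp f k) (x k) (x (k+1)) + D2 (Ld a bm bp f (k-1)) (x (k-1)) (x k)
        + Fdm a bm bp P k (x k) (x (k+1)) + Fdp a bm bp P (k-1) (x (k-1)) (x k) = 0
      \<longleftrightarrow> x (k+1) = gradient_step eta P x k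
          + mu k *\<^sub>R (gradient_step eta P x k - gradient_step eta P x (k-1))"
    if "k \<ge> 1" for k
    unfolding residual[OF that] using a_nonzero[of k] by auto
  then show ?thesis
    unfolding forced_DEL_def nesterov_recurrence_def by blast
qed

lemma Ld_DEL_iff_schemes:
  assumes grad_f: "\<And>z. (f has_derivative (\<lambda>h. P z \<bullet> h)) (at z)"
    and a_nonzero: "\<And>k. a k \<noteq> 0"
    and mu_eq: "\<And>k. mu (k+1) = a k / a (k+1)"
    and eta_eq: "\<And>k. eta k = (bm k + bp k) / a k"
  shows "(\<forall>x. free_DEL (Ld a bm bp f) x \<longleftrightarrow> (\<exists>y. scheme_free mu eta P x y))
    \<and> (\<forall>x. forced_DEL (Ld a bm bp f) (Fdm a bm bp P) (Fdp a bm bp P) x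
           \<longleftrightarrow> (\<exists>y. scheme_forced mu eta P x y))"
proof -
  have a_mu: "a (k-1) = mu k * a k" if "k \<ge> 1" for k
    using mu_eq[of "k-1"] a_nonzero[of k] that by simp
  have b_eta: "bm k + bp k = eta k * a k" for k
    using eta_eq[of k] a_nonzero[of k] by simp
  show ?thesis
    using free_DEL_Ld_iff_heavy_ball[where mu = mu and eta = eta, OF grad_f a_nonzero a_mu b_eta]
      forced_DEL_Ld_iff_nesterov[where mu = mu and eta = eta, OF grad_f a_nonzero a_mu b_eta]
    by (simp add: ex_scheme_free_iff_heavy_ball ex_scheme_forced_iff_nesterov)
qed

lemma Ld_DEL_iff_schemes_momentum:
  assumes grad_f: "\<And>z. (f has_derivative (\<lambda>h. P z \<bullet> h)) (at z)"
    and mu_nonzero: "\<And>k. mu (k+1) \<noteq> 0"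
    and "a 0 = 1"
    and a_rec: "\<And>k. a (k+1) = a k / mu (k+1)"
    and bm_eq: "\<And>k. bm k = 1/2 * a k * eta k"
    and bp_eq: "\<And>k. bp k = 1/2 * a k * eta k"
  shows "(\<forall>x. free_DEL (Ld a bm bp f) x \<longleftrightarrow> (\<exists>y. scheme_free mu eta P x y))
    \<and> (\<forall>x. forced_DEL (Ld a bm bp f) (Fdm a bm bp P) (Fdp a bm bp P) x
           \<longleftrightarrow> (\<exists>y. scheme_forced mu eta P x y))"
proof (rule Ld_DEL_iff_schemes[OF grad_f])
  show a_nonzero: "a k \<noteq> 0" for k
  proof (induction k)
    case (Suc k)
    then show ?case using a_rec[of k] mu_nonzero[of k] by simp
  qed (simp add: \<open>a 0 = 1\<close>)
  show "mu (k+1) = a k / a (k+1)" for k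
    using a_rec[of k] mu_nonzero[of k] a_nonzero[of k] by simp
  show "eta k = (bm k + bp k) / a k" for k
    using a_nonzero[of k] by (simp add: bm_eq bp_eq)
qed

theorem theorem7p2:
  fixes f :: "real ^ 'n \<Rightarrow> real" and P :: "real ^ 'n \<Rightarrow> real ^ 'n"
  assumes grad_f: "\<forall>z. (f has_derivative (\<lambda>h. P z \<bullet> h)) (at z)"
  shows
    "(\<forall>(a::nat \<Rightarrow> real) bm bp (mu::nat \<Rightarrow> real) (eta::nat \<Rightarrow> real).
        (\<forall>k. a k \<noteq> 0) \<and> (\<forall>k. mu (k+1) = a k / a (k+1)) \<and> (\<forall>k. eta k = (bm k + bp k) / a k)
        \<longrightarrow> (\<forall>x. free_DEL (Ld a bm bp f) x \<longleftrightarrow> (\<exists>y. scheme_free mu eta P x y))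
          \<and> (\<forall>x. forced_DEL (Ld a bm bp f) (Fdm a bm bp P) (Fdp a bm bp P) x
                 \<longleftrightarrow> (\<exists>y. scheme_forced mu eta P x y)))
     \<and>
     (\<forall>(mu::nat \<Rightarrow> real) (eta::nat \<Rightarrow> real) (a::nat \<Rightarrow> real) bm bp.
        (\<forall>k. mu (k+1) \<noteq> 0) \<and> a 0 = 1 \<and> (\<forall>k. a (k+1) = a k / mu (k+1))
        \<and> (\<forall>k. bm k = 1/2 * a k * eta k) \<and> (\<forall>k. bp k = 1/2 * a k * eta k)
        \<longrightarrow> (\<forall>x. free_DEL (Ld a bm bp f) x \<longleftrightarrow> (\<exists>y. scheme_free mu eta P x y))
          \<and> (\<forall>x. forced_DEL (Ld a bm bp f) (Fdm a bm bp P) (Fdp a bm bp P) x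
                 \<longleftrightarrow> (\<exists>y. scheme_forced mu eta P x y)))"
  using Ld_DEL_iff_schemes[OF grad_f[rule_format]]
    Ld_DEL_iff_schemes_momentum[OF grad_f[rule_format]]
  by blast

end
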